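(* Let $q,r$ be MIAs over $I$ and $O$ such that $r\sqsubseteq q$. If $q$ is input-enabled, then $r$ is input-enabled.
   Context: A Modal Interface Automaton (MIA) over disjoint alphabets $I,O$ is a tuple $(Q,I,O,\longrightarrow_\Box,\longrightarrow_\Diamond)$ with $Q$ a finite set of states and must/may transition relations $\longrightarrow_\Box,\longrightarrow_\Diamond\subseteq Q\times(I\cup O)\times Q$ such that every must transition is a may transition, and for inputs $i\in I$: must $i$-transitions are deterministic, and every may $i$-transition is a must transition. A MIA $Q$ is input-enabled iff for all $q\in Q$ and all $i\in I$, $q\overset{i}{\longrightarrow}_\Box$. A relation $\mathcal R\subseteq P\times Q$ between MIAs is a MIA-refinement iff for all $(p,q)\in\mathcal R$: (1) $q\overset{a}{\longrightarrow}_\Box q'$, $a\in I\cup O$, implies $\exists p'$: $p\overset{a}{\longrightarrow}_\Box p'$, $(p',q')\in\mathcal R$; (2) $p\overset{\alpha}{\longrightarrow}_\Diamond p'$, $\alpha\in O$, implies $\exists q'$: $q\overset{\alpha}{\longrightarrow}_\Diamond q'$, $(p',q')\in\mathcal R$. $r\sqsubseteq q$ means some MIA-refinement contains $(r,q)$; a MIA is identified with a designated state when writing $r\sqsubseteq q$, and input-enabledness of $r$ refers to its automaton. *)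

theory Defs
  imports Main
begin

record ('s, 'a) mia =
  states  :: "'s set"
  inputs  :: "'a set"
  outputs :: "'a set"
  must    :: "('s \<times> 'a \<times> 's) set"
  may     :: "('s \<times> 'a \<times> 's) set"

definition is_mia :: "('s, 'a) mia \<Rightarrow> bool" where
  "is_mia M \<longleftrightarrow>
     finite (states M) \<and>
     inputs M \<inter> outputs M = {} \<and>
     may M \<subseteq> states M \<times> (inputs M \<union> outputs M) \<times> states M \<and>
     must M \<subseteq> may M \<and>
     (\<forall>p i p' p''. i \<in> inputs M \<longrightarrow> (p, i, p') \<in> must M \<longrightarrow> (p, i, p'') \<in> must M \<longrightarrow> p' = p'') \<and>
     (\<forall>p i p'. i \<in> inputs M \<longrightarrow> (p, i, p') \<in> may M \<longrightarrow> (p, i, p') \<in> must M)"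

definition input_enabled :: "('s, 'a) mia \<Rightarrow> bool" where
  "input_enabled M \<longleftrightarrow>
     (\<forall>q \<in> states M. \<forall>i \<in> inputs M. \<exists>q'. (q, i, q') \<in> must M)"

definition mia_refinement :: "('s, 'a) mia \<Rightarrow> ('t, 'a) mia \<Rightarrow> ('s \<times> 't) set \<Rightarrow> bool" where
  "mia_refinement P Q R \<longleftrightarrow>
     R \<subseteq> states P \<times> states Q \<and>
     (\<forall>(p, q) \<in> R.
        (\<forall>a q'. a \<in> inputs Q \<union> outputs Q \<longrightarrow> (q, a, q') \<in> must Q \<longrightarrow>
            (\<exists>p'. (p, a, p') \<in> must P \<and> (p', q') \<in> R)) \<and>
        (\<forall>\<alpha> p'. \<alpha> \<in> outputs P \<longrightarrow> (p, \<alpha>, p') \<in> may P \<longrightarrow>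
            (\<exists>q'. (q, \<alpha>, q') \<in> may Q \<and> (p', q') \<in> R)))"

definition refines :: "('s, 'a) mia \<Rightarrow> 's \<Rightarrow> ('t, 'a) mia \<Rightarrow> 't \<Rightarrow> bool" where
  "refines P r Q q \<longleftrightarrow> (\<exists>R. mia_refinement P Q R \<and> (r, q) \<in> R)"

(* The MIA identified with designated state r: the automaton P restricted to
   the states reachable from r via (may-)transitions. *)
definition reachable :: "('s, 'a) mia \<Rightarrow> 's \<Rightarrow> 's set" where
  "reachable P r = {p. (r, p) \<in> {(x, y). \<exists>a. (x, a, y) \<in> may P}\<^sup>*}"

definition rooted :: "('s, 'a) mia \<Rightarrow> 's \<Rightarrow> ('s, 'a) mia" where
  "rooted P r = P\<lparr> states := reachable P r,
                   must := {(x, a, y) \<in> must P. x \<in> reachable P r},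
                   may := {(x, a, y) \<in> may P. x \<in> reachable P r} \<rparr>"

end

theory Submission
  imports Defs
begin

text \<open>Every state reachable from \<open>r\<close> is related by the refinement to a state reachable
  from \<open>q\<close>. An output step of \<open>P\<close> is matched by the may clause of refinement. For an input
  step, the related state of \<open>Q\<close> is input-enabled, so the must clause yields a must transition
  of \<open>P\<close> on that input, and input determinism of \<open>P\<close> identifies it with the given step.
  Input-enabledness then transfers along the relation, again by the must clause.\<close>

definition input_enabled_at :: "('s, 'a) mia \<Rightarrow> 's \<Rightarrow> bool" where
  "input_enabled_at M x \<longleftrightarrow> (\<forall>i \<in> inputs M. \<exists>x'. (x, i, x') \<in> must M)"

lemma input_enabled_rooted_iff:
  "input_enabled (rooted M x) \<longleftrightarrow> (\<forall>y \<in> reachable M x. input_enabled_at M y)"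
  unfolding input_enabled_def input_enabled_at_def rooted_def by auto

lemma reachable_self: "x \<in> reachable M x"
  unfolding reachable_def by simp

lemma reachable_may_step:
  assumes "y \<in> reachable M x" and "(y, a, z) \<in> may M"
  shows "z \<in> reachable M x"
  using assms unfolding reachable_def by (auto intro: rtrancl_into_rtrancl)

lemma reachable_induct [consumes 1, case_names self step]:
  assumes "y \<in> reachable M x"
    and "P x"
    and "\<And>y a z. y \<in> reachable M x \<Longrightarrow> P y \<Longrightarrow> (y, a, z) \<in> may M \<Longrightarrow> P z"
  shows "P y"
proof -
  have "(x, y) \<in> {(u, v). \<exists>a. (u, a, v) \<in> may M}\<^sup>*"
    using assms(1) unfolding reachable_def by simp
  then show ?thesis
    by (induction rule: rtrancl_induct) (auto intro: assms(2,3) simp: reachable_def)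
qed

lemma is_mia_may_label:
  "is_mia M \<Longrightarrow> (x, a, y) \<in> may M \<Longrightarrow> a \<in> inputs M \<or> a \<in> outputs M"
  unfolding is_mia_def by blast

lemma is_mia_must_may: "is_mia M \<Longrightarrow> (x, a, y) \<in> must M \<Longrightarrow> (x, a, y) \<in> may M"
  unfolding is_mia_def by blast

lemma is_mia_input_may_must:
  "is_mia M \<Longrightarrow> i \<in> inputs M \<Longrightarrow> (x, i, y) \<in> may M \<Longrightarrow> (x, i, y) \<in> must M"
  unfolding is_mia_def by blast

lemma is_mia_input_deterministic:
  "is_mia M \<Longrightarrow> i \<in> inputs M \<Longrightarrow> (x, i, y) \<in> must M \<Longrightarrow> (x, i, z) \<in> must M \<Longrightarrow> y = z"
  unfolding is_mia_def by blast

lemma mia_refinement_must: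
  assumes "mia_refinement P Q R" and "(p, q) \<in> R"
    and "a \<in> inputs Q \<union> outputs Q" and "(q, a, q') \<in> must Q"
  shows "\<exists>p'. (p, a, p') \<in> must P \<and> (p', q') \<in> R"
  using assms unfolding mia_refinement_def by fast

lemma mia_refinement_may_output:
  assumes "mia_refinement P Q R" and "(p, q) \<in> R"
    and "a \<in> outputs P" and "(p, a, p') \<in> may P"
  shows "\<exists>q'. (q, a, q') \<in> may Q \<and> (p', q') \<in> R"
  using assms unfolding mia_refinement_def by fast

lemma refinement_input_enabled_at:
  assumes "mia_refinement P Q R" and "(p, q) \<in> R"
    and "inputs P = inputs Q" and "input_enabled_at Q q"
  shows "input_enabled_at P p"
  unfolding input_enabled_at_def
proof
  fix i assume "i \<in> inputs P"
  then have i: "i \<in> inputs Q \<union> outputs Q"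
    using assms(3) by simp
  then obtain q' where "(q, i, q') \<in> must Q"
    using assms(4) \<open>i \<in> inputs P\<close> assms(3) unfolding input_enabled_at_def by blast
  then show "\<exists>p'. (p, i, p') \<in> must P"
    using mia_refinement_must[OF assms(1,2) i] by blast
qed

lemma refinement_may_step:
  assumes "is_mia P" and "is_mia Q"
    and "inputs P = inputs Q"
    and "mia_refinement P Q R" and "(p, q) \<in> R"
    and "input_enabled_at Q q"
    and step: "(p, a, p') \<in> may P"
  shows "\<exists>q'. (q, a, q') \<in> may Q \<and> (p', q') \<in> R"
  using is_mia_may_label[OF assms(1) step]
proof
  assume input: "a \<in> inputs P"
  obtain q' where q': "(q, a, q') \<in> must Q"
    using assms(3,6) input unfolding input_enabled_at_def by blast
  then obtain p'' where p'': "(p, a, p'') \<in> must P" "(p'', q') \<in> R"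
    using mia_refinement_must[OF assms(4,5)] assms(3) input by blast
  have "p'' = p'"
    using is_mia_input_deterministic[OF assms(1) input p''(1)]
      is_mia_input_may_must[OF assms(1) input step] .
  then show ?thesis
    using p''(2) is_mia_must_may[OF assms(2) q'] by blast
next
  assume "a \<in> outputs P"
  then show ?thesis
    using mia_refinement_may_output[OF assms(4,5) _ step] by blast
qed

lemma refinement_reachable:
  assumes "is_mia P" and "is_mia Q"
    and "inputs P = inputs Q"
    and "mia_refinement P Q R" and "(r, q) \<in> R"
    and "input_enabled (rooted Q q)"
    and "p \<in> reachable P r"
  shows "\<exists>q' \<in> reachable Q q. (p, q') \<in> R"
  using assms(7)
proof (induction rule: reachable_induct)
  case self
  then show ?case
    using assms(5) reachable_self[of q Q] by blast
next
  case (step y a z)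
  from \<open>\<exists>q' \<in> reachable Q q. (y, q') \<in> R\<close>
  obtain q' where q': "q' \<in> reachable Q q" "(y, q') \<in> R"
    by blast
  have "input_enabled_at Q q'"
    using assms(6) q'(1) unfolding input_enabled_rooted_iff by blast
  then obtain q'' where "(q', a, q'') \<in> may Q" "(z, q'') \<in> R"
    using refinement_may_step[OF assms(1-4) q'(2)] \<open>(y, a, z) \<in> may P\<close> by blast
  then show ?case
    using reachable_may_step[OF q'(1)] by blast
qed

theorem lemma3:
  fixes I Out :: "'a set" and P :: "('s, 'a) mia" and Q :: "('t, 'a) mia" and r :: 's and q :: 't
  assumes "is_mia P" and "is_mia Q"
    and "inputs P = I" and "outputs P = Out" and "inputs Q = I" and "outputs Q = Out"
    and "r \<in> states P" and "q \<in> states Q"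
    and "refines P r Q q"
    and "input_enabled (rooted Q q)"
  shows "input_enabled (rooted P r)"
proof -
  obtain R where R: "mia_refinement P Q R" "(r, q) \<in> R"
    using assms(9) unfolding refines_def by blast
  have same_inputs: "inputs P = inputs Q"
    using assms(3,5) by simp
  show ?thesis
    unfolding input_enabled_rooted_iff
  proof
    fix p assume "p \<in> reachable P r"
    then obtain q' where q': "q' \<in> reachable Q q" "(p, q') \<in> R"
      using refinement_reachable[OF assms(1,2) same_inputs R assms(10)] by blast
    have "input_enabled_at Q q'"
      using assms(10) q'(1) unfolding input_enabled_rooted_iff by blast
    then show "input_enabled_at P p"
      by (rule refinement_input_enabled_at[OF R(1) q'(2) same_inputs])
  qed
qed

end
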